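(* Let $G=(V,E)$ be a graph with no isolated vertices and $m\ge1$ edges, and let $d$ be an optimal solution of $\mathrm{IP}_{\mathrm{sparse}}$. Let $G_d=(V,E_d)$ be the graph with an edge $\{i,j\}$ for every pair $i\neq j$ with $d_{i,j}=0$. Then every connected component $C$ of $G_d$ induces a connected subgraph $G[C]$ of $G$.
   Context: $G=(V,E)$ is an undirected simple graph, $V=\{1,\dots,n\}$, $m=|E|$, adjacency matrix $A$, degrees $d_i$, modularity matrix $B_{i,j}=A_{i,j}-\frac{d_id_j}{2m}$. Variables $d_{i,j}$ satisfy $d_{i,j}=d_{j,i}$, $d_{i,i}=0$. $N(i)$ is the neighbor set of $i$ and $N(i,j)=(N(i)\cup N(j))\setminus\{i,j\}$. $\mathrm{IP}_{\mathrm{sparse}}$: maximize $-\frac{1}{2m}\sum_{i,j}B_{i,j}d_{i,j}$ subject to $d_{i,k}+d_{k,j}\ge d_{i,j}$ for every pair $i\ne j$ and every $k\in N(i,j)$, and $d_{i,j}\in\{0,1\}$ for all $i\ne j$. *)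

theory Defs
  imports Complex_Main
begin

definition simple_graph :: "nat \<Rightarrow> (nat \<Rightarrow> nat \<Rightarrow> bool) \<Rightarrow> bool" where
  "simple_graph n adj \<longleftrightarrow>
     (\<forall>i j. adj i j \<longrightarrow> i \<in> {1..n} \<and> j \<in> {1..n}) \<and>
     (\<forall>i j. adj i j \<longleftrightarrow> adj j i) \<and> (\<forall>i. \<not> adj i i)"

definition num_edges :: "nat \<Rightarrow> (nat \<Rightarrow> nat \<Rightarrow> bool) \<Rightarrow> nat" where
  "num_edges n adj = card {{i, j} | i j. i \<in> {1..n} \<and> j \<in> {1..n} \<and> adj i j}"

definition degree :: "nat \<Rightarrow> (nat \<Rightarrow> nat \<Rightarrow> bool) \<Rightarrow> nat \<Rightarrow> nat" where
  "degree n adj i = card {j \<in> {1..n}. adj i j}"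

definition adjm :: "(nat \<Rightarrow> nat \<Rightarrow> bool) \<Rightarrow> nat \<Rightarrow> nat \<Rightarrow> real" where
  "adjm adj i j = (if adj i j then 1 else 0)"

definition modularity_matrix :: "nat \<Rightarrow> (nat \<Rightarrow> nat \<Rightarrow> bool) \<Rightarrow> nat \<Rightarrow> nat \<Rightarrow> real" where
  "modularity_matrix n adj i j =
     adjm adj i j - real (degree n adj i) * real (degree n adj j) / (2 * real (num_edges n adj))"

definition nbrs :: "nat \<Rightarrow> (nat \<Rightarrow> nat \<Rightarrow> bool) \<Rightarrow> nat \<Rightarrow> nat set" where
  "nbrs n adj i = {k \<in> {1..n}. adj i k}"

definition nbrs2 :: "nat \<Rightarrow> (nat \<Rightarrow> nat \<Rightarrow> bool) \<Rightarrow> nat \<Rightarrow> nat \<Rightarrow> nat set" where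
  "nbrs2 n adj i j = (nbrs n adj i \<union> nbrs n adj j) - {i, j}"

definition ip_objective :: "nat \<Rightarrow> (nat \<Rightarrow> nat \<Rightarrow> bool) \<Rightarrow> (nat \<Rightarrow> nat \<Rightarrow> real) \<Rightarrow> real" where
  "ip_objective n adj d =
     - (1 / (2 * real (num_edges n adj))) *
       (\<Sum>i\<in>{1..n}. \<Sum>j\<in>{1..n}. modularity_matrix n adj i j * d i j)"

definition ip_sparse_feasible :: "nat \<Rightarrow> (nat \<Rightarrow> nat \<Rightarrow> bool) \<Rightarrow> (nat \<Rightarrow> nat \<Rightarrow> real) \<Rightarrow> bool" where
  "ip_sparse_feasible n adj d \<longleftrightarrow>
     (\<forall>i\<in>{1..n}. \<forall>j\<in>{1..n}. d i j = d j i) \<and>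
     (\<forall>i\<in>{1..n}. d i i = 0) \<and>
     (\<forall>i\<in>{1..n}. \<forall>j\<in>{1..n}. i \<noteq> j \<longrightarrow> d i j \<in> {0, 1}) \<and>
     (\<forall>i\<in>{1..n}. \<forall>j\<in>{1..n}. i \<noteq> j \<longrightarrow>
        (\<forall>k\<in>nbrs2 n adj i j. d i k + d k j \<ge> d i j))"

definition ip_sparse_optimal :: "nat \<Rightarrow> (nat \<Rightarrow> nat \<Rightarrow> bool) \<Rightarrow> (nat \<Rightarrow> nat \<Rightarrow> real) \<Rightarrow> bool" where
  "ip_sparse_optimal n adj d \<longleftrightarrow>
     ip_sparse_feasible n adj d \<and>
     (\<forall>d'. ip_sparse_feasible n adj d' \<longrightarrow> ip_objective n adj d' \<le> ip_objective n adj d)"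

definition Gd_rel :: "nat \<Rightarrow> (nat \<Rightarrow> nat \<Rightarrow> real) \<Rightarrow> (nat \<times> nat) set" where
  "Gd_rel n d = {(i, j). i \<in> {1..n} \<and> j \<in> {1..n} \<and> i \<noteq> j \<and> d i j = 0}"

definition G_rel :: "(nat \<Rightarrow> nat \<Rightarrow> bool) \<Rightarrow> (nat \<times> nat) set" where
  "G_rel adj = {(i, j). adj i j}"

definition component_of :: "nat \<Rightarrow> (nat \<times> nat) set \<Rightarrow> nat \<Rightarrow> nat set" where
  "component_of n R v = {u \<in> {1..n}. (v, u) \<in> R\<^sup>*}"

definition is_component :: "nat \<Rightarrow> (nat \<times> nat) set \<Rightarrow> nat set \<Rightarrow> bool" where
  "is_component n R C \<longleftrightarrow> (\<exists>v\<in>{1..n}. C = component_of n R v)"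

definition induced_connected :: "(nat \<times> nat) set \<Rightarrow> nat set \<Rightarrow> bool" where
  "induced_connected R S \<longleftrightarrow>
     (\<forall>i\<in>S. \<forall>j\<in>S. (i, j) \<in> (R \<inter> (S \<times> S))\<^sup>*)"

end

theory Submission
  imports Defs
begin

(* Let C be a component of G_d and suppose G[C] is
   disconnected.  Then C splits into two nonempty parts S and T with no edge of G
   between them.  Separating them, i.e. setting d'_{ij} = 1 for every pair across
   the cut and keeping d elsewhere, yields a feasible solution: because C is closed
   under zero distances, no k can be at distance 0 from both sides of the cut, so
   every triangle inequality still holds.  Every modified pair is a non-edge between
   vertices of positive degree, hence has B_{ij} < 0, so the objective cannot
   decrease; and since C is connected in G_d, some pair across the cut had
   d_{ij} = 0, so the objective strictly increases -- contradicting optimality. *)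

text \<open>A set whose induced subgraph is not connected splits into two nonempty parts
  with no edge in between: take the vertices reachable from one vertex inside the set.\<close>
lemma split_disconnected:
  assumes "\<not> induced_connected R C"
  obtains S T where "S \<inter> T = {}" "S \<union> T = C" "S \<noteq> {}" "T \<noteq> {}"
    "\<And>a b. a \<in> S \<Longrightarrow> b \<in> T \<Longrightarrow> (a, b) \<notin> R"
proof -
  let ?Q = "R \<inter> C \<times> C"
  obtain i j where ij: "i \<in> C" "j \<in> C" "(i, j) \<notin> ?Q\<^sup>*"
    using assms unfolding induced_connected_def by blast
  define S where "S = {u \<in> C. (i, u) \<in> ?Q\<^sup>*}"
  have "\<And>a b. a \<in> S \<Longrightarrow> b \<in> C - S \<Longrightarrow> (a, b) \<notin> R"
    unfolding S_def by (auto intro: rtrancl_into_rtrancl)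
  moreover have "i \<in> S" "j \<in> C - S" using ij unfolding S_def by auto
  ultimately show ?thesis by (intro that[of S "C - S"]) (auto simp: S_def)
qed

lemma rtrancl_leaves_set:
  assumes "(x, y) \<in> R\<^sup>*" "x \<in> S" "y \<notin> S"
  obtains a b where "(a, b) \<in> R" "a \<in> S" "b \<notin> S"
  using assms by (induction rule: rtrancl_induct) blast+

lemma component_connected:
  assumes "sym R" "u \<in> component_of n R v" "w \<in> component_of n R v"
  shows "(u, w) \<in> R\<^sup>*"
proof -
  have "(v, u) \<in> R\<^sup>*" "(v, w) \<in> R\<^sup>*" using assms(2,3) unfolding component_of_def by auto
  then have "(u, v) \<in> R\<^sup>*" using sym_rtrancl[OF assms(1)] by (auto simp: sym_def)
  then show ?thesis using \<open>(v, w) \<in> R\<^sup>*\<close> by simp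
qed

lemma component_closed:
  assumes "u \<in> component_of n R v" "(u, w) \<in> R" "w \<in> {1..n}"
  shows "w \<in> component_of n R v"
  using assms unfolding component_of_def by (auto intro: rtrancl_into_rtrancl)

lemma sym_Gd_rel:
  assumes "ip_sparse_feasible n adj d"
  shows "sym (Gd_rel n d)"
  using assms unfolding sym_def Gd_rel_def ip_sparse_feasible_def by auto

lemma component_zero_closed:
  assumes "is_component n (Gd_rel n d) C" "i \<in> C" "k \<in> {1..n}" "i \<noteq> k" "d i k = 0"
  shows "k \<in> C"
proof -
  obtain v where C: "C = component_of n (Gd_rel n d) v"
    using assms(1) unfolding is_component_def by blast
  then have "i \<in> {1..n}" using assms(2) unfolding component_of_def by auto
  then have "(i, k) \<in> Gd_rel n d" using assms(3-5) unfolding Gd_rel_def by auto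
  then show ?thesis using component_closed assms(2,3) C by blast
qed

text \<open>If a component of G_d is split into two nonempty parts, then some pair at distance 0
  crosses the split, because the component is connected in G_d.\<close>
lemma component_crossing_zero_pair:
  assumes feas: "ip_sparse_feasible n adj d" and C: "is_component n (Gd_rel n d) C"
    and ST: "S \<inter> T = {}" "S \<union> T = C" "s \<in> S" "t \<in> T"
  obtains a b where "a \<in> S" "b \<in> T" "a \<in> {1..n}" "b \<in> {1..n}" "d a b = 0"
proof -
  obtain v where v: "C = component_of n (Gd_rel n d) v"
    using C unfolding is_component_def by blast
  then have "(s, t) \<in> (Gd_rel n d)\<^sup>*"
    using component_connected[OF sym_Gd_rel[OF feas]] ST by blast
  then obtain a b where ab: "(a, b) \<in> Gd_rel n d" "a \<in> S" "b \<notin> S"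
    using ST(1,3,4) by (elim rtrancl_leaves_set) auto
  then have "b \<in> C" using component_closed[of a n _ v] v ST(2) unfolding Gd_rel_def by auto
  then show ?thesis using that ab ST(2) unfolding Gd_rel_def by auto
qed

lemma degree_pos:
  assumes "simple_graph n adj" "\<exists>j. adj i j"
  shows "degree n adj i > 0"
proof -
  obtain j where "adj i j" using assms(2) by blast
  then have "j \<in> {j \<in> {1..n}. adj i j}" using assms(1) unfolding simple_graph_def by auto
  then show ?thesis unfolding degree_def by (auto simp: card_gt_0_iff)
qed

lemma modularity_matrix_neg:
  assumes "\<not> adj i j" "degree n adj i > 0" "degree n adj j > 0" "num_edges n adj > 0"
  shows "modularity_matrix n adj i j < 0"
  using assms unfolding modularity_matrix_def adjm_def by simp

lemma ip_objective_strict_increase: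
  assumes m: "num_edges n adj > 0"
    and le: "\<And>i j. i \<in> {1..n} \<Longrightarrow> j \<in> {1..n} \<Longrightarrow>
               modularity_matrix n adj i j * (d' i j - d i j) \<le> 0"
    and ab: "a \<in> {1..n}" "b \<in> {1..n}" "modularity_matrix n adj a b * (d' a b - d a b) < 0"
  shows "ip_objective n adj d < ip_objective n adj d'"
proof -
  let ?B = "modularity_matrix n adj"
  have row_a: "(\<Sum>j\<in>{1..n}. ?B a j * (d' a j - d a j)) < (\<Sum>j\<in>{1..n}. 0)"
    by (rule sum_strict_mono_ex1) (use le ab in auto)
  have rows: "(\<Sum>j\<in>{1..n}. ?B i j * (d' i j - d i j)) \<le> 0" if "i \<in> {1..n}" for i
    using le that by (intro sum_nonpos) auto
  have "(\<Sum>i\<in>{1..n}. \<Sum>j\<in>{1..n}. ?B i j * (d' i j - d i j)) < (\<Sum>i\<in>{1..n}. 0)"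
    by (rule sum_strict_mono_ex1) (use rows row_a ab in auto)
  then have "(\<Sum>i\<in>{1..n}. \<Sum>j\<in>{1..n}. ?B i j * d' i j) < (\<Sum>i\<in>{1..n}. \<Sum>j\<in>{1..n}. ?B i j * d i j)"
    by (simp add: right_diff_distrib sum_subtractf)
  then show ?thesis using m unfolding ip_objective_def by (simp add: field_simps)
qed

definition separate :: "nat set \<Rightarrow> nat set \<Rightarrow> (nat \<Rightarrow> nat \<Rightarrow> real) \<Rightarrow> nat \<Rightarrow> nat \<Rightarrow> real" where
  "separate S T d i j = (if (i \<in> S \<and> j \<in> T) \<or> (i \<in> T \<and> j \<in> S) then 1 else d i j)"

lemma separate_zero_same_side:
  assumes disj: "S \<inter> T = {}"
    and closed: "\<And>i k. i \<in> S \<union> T \<Longrightarrow> k \<in> {1..n} \<Longrightarrow> i \<noteq> k \<Longrightarrow> d i k = 0 \<Longrightarrow> k \<in> S \<union> T"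
    and ik: "i \<in> S \<union> T" "k \<in> {1..n}" "i \<noteq> k" "separate S T d i k = 0"
  shows "(i \<in> S \<longleftrightarrow> k \<in> S) \<and> (i \<in> T \<longleftrightarrow> k \<in> T)"
proof -
  have no_cut: "\<not> ((i \<in> S \<and> k \<in> T) \<or> (i \<in> T \<and> k \<in> S))" and "d i k = 0"
    using ik(4) unfolding separate_def by (auto split: if_splits)
  then have "k \<in> S \<union> T" using closed[OF ik(1-3)] by simp
  then show ?thesis using ik(1) no_cut disj by auto
qed

text \<open>Separating two disjoint sets whose union is closed under zero distances preserves
  feasibility: a vertex at distance 0 from both endpoints of a separated pair would lie in
  S \<union> T on both sides of the cut.\<close>
lemma separate_feasible:
  assumes feas: "ip_sparse_feasible n adj d"
    and disj: "S \<inter> T = {}"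
    and closed: "\<And>i k. i \<in> S \<union> T \<Longrightarrow> k \<in> {1..n} \<Longrightarrow> i \<noteq> k \<Longrightarrow> d i k = 0 \<Longrightarrow> k \<in> S \<union> T"
  shows "ip_sparse_feasible n adj (separate S T d)"
proof -
  let ?d' = "separate S T d"
  have dsym: "\<And>i j. i \<in> {1..n} \<Longrightarrow> j \<in> {1..n} \<Longrightarrow> d i j = d j i"
    and d01: "\<And>i j. i \<in> {1..n} \<Longrightarrow> j \<in> {1..n} \<Longrightarrow> i \<noteq> j \<Longrightarrow> d i j \<in> {0, 1}"
    and dtri: "\<And>i j k. i \<in> {1..n} \<Longrightarrow> j \<in> {1..n} \<Longrightarrow> i \<noteq> j \<Longrightarrow> k \<in> nbrs2 n adj i j \<Longrightarrow>
                 d i k + d k j \<ge> d i j"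
    using feas unfolding ip_sparse_feasible_def by blast+
  have d'01: "\<And>i j. i \<in> {1..n} \<Longrightarrow> j \<in> {1..n} \<Longrightarrow> i \<noteq> j \<Longrightarrow> ?d' i j \<in> {0, 1}"
    using d01 unfolding separate_def by auto
  have tri: "?d' i k + ?d' k j \<ge> ?d' i j"
    if ij: "i \<in> {1..n}" "j \<in> {1..n}" "i \<noteq> j" and k: "k \<in> nbrs2 n adj i j" for i j k
  proof -
    have kn: "k \<in> {1..n}" "k \<noteq> i" "k \<noteq> j" using k unfolding nbrs2_def nbrs_def by auto
    show ?thesis
    proof (cases "(i \<in> S \<and> j \<in> T) \<or> (i \<in> T \<and> j \<in> S)")
      case cut: True
      have sides: "i \<in> S \<union> T" "j \<in> S \<union> T" using cut by auto
      have "\<not> (?d' i k = 0 \<and> ?d' k j = 0)"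
      proof
        assume zero: "?d' i k = 0 \<and> ?d' k j = 0"
        have "?d' j k = ?d' k j" using dsym ij kn unfolding separate_def by auto
        then have "?d' j k = 0" using zero by simp
        then have "(j \<in> S \<longleftrightarrow> k \<in> S) \<and> (j \<in> T \<longleftrightarrow> k \<in> T)"
          using separate_zero_same_side[OF disj closed sides(2) kn(1)] kn(3) by simp
        moreover have "(i \<in> S \<longleftrightarrow> k \<in> S) \<and> (i \<in> T \<longleftrightarrow> k \<in> T)"
          using separate_zero_same_side[OF disj closed sides(1) kn(1)] kn(2) zero by simp
        ultimately show False using cut disj by blast
      qed
      moreover have "?d' i k \<in> {0, 1}" "?d' k j \<in> {0, 1}" using d'01 ij kn by auto
      moreover have "?d' i j = 1" using cut by (simp add: separate_def)
      ultimately show ?thesis by auto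
    next
      case False
      then have "?d' i j = d i j" unfolding separate_def by auto
      also have "\<dots> \<le> d i k + d k j" using dtri ij k by blast
      also have "\<dots> \<le> ?d' i k + ?d' k j"
        using d01 ij kn unfolding separate_def by (intro add_mono) fastforce+
      finally show ?thesis .
    qed
  qed
  have "?d' i j = ?d' j i" if "i \<in> {1..n}" "j \<in> {1..n}" for i j
    using dsym[OF that] unfolding separate_def by auto
  moreover have "?d' i i = 0" if "i \<in> {1..n}" for i
    using feas that disj unfolding ip_sparse_feasible_def separate_def by auto
  ultimately show ?thesis using d'01 tri unfolding ip_sparse_feasible_def by blast
qed

lemma separate_improves:
  assumes G: "simple_graph n adj" "\<forall>i\<in>{1..n}. \<exists>j. adj i j" "num_edges n adj > 0"
    and feas: "ip_sparse_feasible n adj d" and disj: "S \<inter> T = {}"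
    and no_edge: "\<And>a b. a \<in> S \<Longrightarrow> b \<in> T \<Longrightarrow> \<not> adj a b"
    and ab: "a \<in> S" "b \<in> T" "a \<in> {1..n}" "b \<in> {1..n}" "d a b = 0"
  shows "ip_objective n adj d < ip_objective n adj (separate S T d)"
proof (rule ip_objective_strict_increase[OF G(3)])
  let ?B = "modularity_matrix n adj"
  have cut_neg: "?B i j < 0"
    if "i \<in> {1..n}" "j \<in> {1..n}" "(i \<in> S \<and> j \<in> T) \<or> (i \<in> T \<and> j \<in> S)" for i j
  proof (rule modularity_matrix_neg)
    show "\<not> adj i j" using that(3) no_edge G(1) unfolding simple_graph_def by blast
  qed (use that G degree_pos in auto)
  show "?B i j * (separate S T d i j - d i j) \<le> 0" if "i \<in> {1..n}" "j \<in> {1..n}" for i j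
  proof (cases "(i \<in> S \<and> j \<in> T) \<or> (i \<in> T \<and> j \<in> S)")
    case True
    then have "i \<noteq> j" using disj by blast
    then have "d i j \<le> 1" using feas that unfolding ip_sparse_feasible_def by fastforce
    then show ?thesis
      using cut_neg[OF that True] True unfolding separate_def by (simp add: mult_nonpos_nonneg)
  qed (auto simp: separate_def)
  show "?B a b * (separate S T d a b - d a b) < 0"
    using cut_neg[of a b] ab unfolding separate_def by simp
qed (use ab in auto)

theorem mainTheorem2:
  fixes n :: nat and adj :: "nat \<Rightarrow> nat \<Rightarrow> bool" and d :: "nat \<Rightarrow> nat \<Rightarrow> real"
    and C :: "nat set"
  assumes "simple_graph n adj"
    and "\<forall>i\<in>{1..n}. \<exists>j. adj i j"
    and "num_edges n adj \<ge> 1"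
    and "ip_sparse_optimal n adj d"
    and "is_component n (Gd_rel n d) C"
  shows "induced_connected (G_rel adj) C"
proof (rule ccontr)
  assume "\<not> induced_connected (G_rel adj) C"
  then obtain S T where ST: "S \<inter> T = {}" "S \<union> T = C" "S \<noteq> {}" "T \<noteq> {}"
    and no_edge: "\<And>a b. a \<in> S \<Longrightarrow> b \<in> T \<Longrightarrow> \<not> adj a b"
    by (rule split_disconnected) (auto simp: G_rel_def)
  have feas: "ip_sparse_feasible n adj d"
    and opt: "\<And>d'. ip_sparse_feasible n adj d' \<Longrightarrow> ip_objective n adj d' \<le> ip_objective n adj d"
    using assms(4) unfolding ip_sparse_optimal_def by auto
  obtain a b where ab: "a \<in> S" "b \<in> T" "a \<in> {1..n}" "b \<in> {1..n}" "d a b = 0"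
    using component_crossing_zero_pair[OF feas assms(5) ST(1,2)] ST(3,4) by blast
  have "ip_objective n adj d < ip_objective n adj (separate S T d)"
    using separate_improves[OF assms(1,2) _ feas ST(1) no_edge ab] assms(3) by simp
  moreover have "ip_sparse_feasible n adj (separate S T d)"
    using separate_feasible[OF feas ST(1)] component_zero_closed[OF assms(5)] ST(2) by blast
  ultimately show False using opt by fastforce
qed

end
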